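(* Let $H$ be a graph on $h\geq 10$ vertices and let $B\subseteq V(H)$ with $|B|\leq\frac{h}{100}$. Suppose every vertex in $B$ has at least $4|B|+2$ neighbours in $H$ and every vertex outside $B$ has at least $\frac{h}{2}+5|B|+5$ neighbours in $H$. Then for every $3\leq\ell\leq h$ there is a cycle of length $\ell$ in $H$ on which no four consecutive vertices contain more than one vertex of $B$. Furthermore, for any two vertices $x,y\notin B$ and every $5\leq\ell\leq h$, there is a path on $\ell$ vertices in $H$ with end-vertices $x$ and $y$ on which no four consecutive vertices contain more than one vertex of $B\cup\{x,y\}$. *)

theory Defs
  imports Complex_Main
begin

definition simple_graph :: "'a set \<Rightarrow> ('a \<Rightarrow> 'a \<Rightarrow> bool) \<Rightarrow> bool" where
  "simple_graph V E \<longleftrightarrow> finite V \<and> (\<forall>u v. E u v \<longrightarrow> u \<in> V \<and> v \<in> V)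
     \<and> (\<forall>u v. E u v \<longrightarrow> E v u) \<and> (\<forall>v. \<not> E v v)"

definition neighbours :: "'a set \<Rightarrow> ('a \<Rightarrow> 'a \<Rightarrow> bool) \<Rightarrow> 'a \<Rightarrow> 'a set" where
  "neighbours V E v = {u \<in> V. E v u}"

definition is_cycle :: "'a set \<Rightarrow> ('a \<Rightarrow> 'a \<Rightarrow> bool) \<Rightarrow> 'a list \<Rightarrow> bool" where
  "is_cycle V E c \<longleftrightarrow> length c \<ge> 3 \<and> distinct c \<and> set c \<subseteq> V
     \<and> (\<forall>i < length c. E (c ! i) (c ! ((i + 1) mod length c)))"

definition is_path :: "'a set \<Rightarrow> ('a \<Rightarrow> 'a \<Rightarrow> bool) \<Rightarrow> 'a list \<Rightarrow> bool" where
  "is_path V E p \<longleftrightarrow> p \<noteq> [] \<and> distinct p \<and> set p \<subseteq> V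
     \<and> (\<forall>i. i + 1 < length p \<longrightarrow> E (p ! i) (p ! (i + 1)))"

definition cycle_sparse4 :: "'a list \<Rightarrow> 'a set \<Rightarrow> bool" where
  "cycle_sparse4 c S \<longleftrightarrow> (\<forall>i < length c.
     card ((\<lambda>j. c ! ((i + j) mod length c)) ` {..<4} \<inter> S) \<le> 1)"

definition path_sparse4 :: "'a list \<Rightarrow> 'a set \<Rightarrow> bool" where
  "path_sparse4 p S \<longleftrightarrow> (\<forall>i. i + 3 < length p \<longrightarrow>
     card ((\<lambda>j. p ! (i + j)) ` {..<4} \<inter> S) \<le> 1)"

end

theory Submission
  imports Defs
begin

text \<open>
  Let A = V - B. Every vertex of A has at least (|A| + 6)/2 neighbours in A, and graphs with
  this minimum degree are panconnected: any two distinct vertices are joined by paths with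
  every number of vertices from 3 to |A|. This goes by induction on the size of the graph.
  A path P with m vertices is lengthened by one vertex, keeping its ends, by replacing a
  stretch of P with a detour through W = A - P that has one vertex more. If no vertex of W is
  adjacent to two consecutive vertices of P, every vertex of W has at most (m + 1)/2
  neighbours on P, hence many in W. If some z in W attains (m + 1)/2, it sees every even
  position of P and short detours through z can be found directly; otherwise W itself
  satisfies the degree condition, the induction hypothesis makes it panconnected, and a path
  in W joins neighbours of two path vertices at a suitable distance.

  Cycles and paths with |A| + k vertices must use k vertices of B. These are placed on a chain
  b w c f b' w' c' f' ... y ending at y, on which consecutive vertices of B are exactly four
  apart (the degree bounds leave room to choose w, c, f in A afresh each time), and a
  Hamiltonian path of the rest of A leads from x to the head of the chain.
\<close>

lemma is_path_successively:
  "is_path R E p \<longleftrightarrow> p \<noteq> [] \<and> distinct p \<and> set p \<subseteq> R \<and> successively E p"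
  by (simp add: is_path_def successively_conv_nth)

lemma is_path_append:
  assumes "p \<noteq> []" "q \<noteq> []"
  shows "is_path R E (p @ q) \<longleftrightarrow>
    is_path R E p \<and> is_path R E q \<and> set p \<inter> set q = {} \<and> E (last p) (hd q)"
  using assms by (auto simp: is_path_successively successively_append_iff)

lemma is_path_mono: "is_path R E p \<Longrightarrow> R \<subseteq> R' \<Longrightarrow> is_path R' E p"
  by (auto simp: is_path_def)

lemma is_path_take:
  assumes "is_path R E p" "0 < n" "n < length p"
  shows "is_path R E (take n p)"
proof -
  have "p \<noteq> []" using assms(3) by auto
  with assms is_path_append[of "take n p" "drop n p" R E] show ?thesis by simp
qed

lemma is_path_drop:
  assumes "is_path R E p" "0 < n" "n < length p"
  shows "is_path R E (drop n p)"
proof -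
  have "p \<noteq> []" using assms(3) by auto
  with assms is_path_append[of "take n p" "drop n p" R E] show ?thesis by simp
qed

lemma is_cycle_if_path:
  assumes "is_path R E p" "3 \<le> length p" "E (last p) (hd p)"
  shows "is_cycle R E p"
  unfolding is_cycle_def
proof (intro conjI allI impI)
  show "distinct p" "set p \<subseteq> R" using assms(1) by (auto simp: is_path_def)
  fix i assume i: "i < length p"
  show "E (p ! i) (p ! ((i + 1) mod length p))"
  proof (cases "i + 1 < length p")
    case True
    then show ?thesis using assms(1) by (simp add: is_path_def)
  next
    case False
    with i have "i + 1 = length p" by simp
    then have "i = length p - 1" "(i + 1) mod length p = 0" by auto
    moreover have "p \<noteq> []" using assms(2) by auto
    ultimately show ?thesis using assms(3) by (simp add: last_conv_nth hd_conv_nth)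
  qed
qed (use assms(2) in simp)

section \<open>Sets of naturals without two consecutive elements\<close>

lemma card_no_consecutive:
  assumes "S \<subseteq> {a..<b}" "\<forall>i\<in>S. Suc i \<notin> S"
  shows "2 * card S \<le> b - a + 1"
proof -
  have fin: "finite S" using assms(1) finite_subset by blast
  have "S \<inter> Suc ` S = {}" using assms(2) by auto
  then have "card (S \<union> Suc ` S) = 2 * card S"
    using fin by (simp add: card_Un_disjoint card_image)
  moreover have "S \<union> Suc ` S \<subseteq> {a..<b + 1}" using assms(1) by auto
  ultimately show ?thesis using card_mono[OF finite_atLeastLessThan, of "S \<union> Suc ` S" a "b + 1"] by simp
qed

lemma card_no_consecutive_two_intervals:
  assumes "S \<subseteq> {a..<b} \<union> {c..<d}" "\<forall>i\<in>S. Suc i \<notin> S"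
  shows "2 * card S \<le> (b - a) + (d - c) + 2"
proof -
  have "S = S \<inter> {a..<b} \<union> S \<inter> {c..<d}" using assms(1) by blast
  then have "card S \<le> card (S \<inter> {a..<b}) + card (S \<inter> {c..<d})"
    by (metis card_Un_le)
  moreover have "2 * card (S \<inter> {a..<b}) \<le> b - a + 1" "2 * card (S \<inter> {c..<d}) \<le> d - c + 1"
    using assms(2) by (intro card_no_consecutive; auto)+
  ultimately show ?thesis by linarith
qed

lemma even_mem_if_no_consecutive:
  assumes "S \<subseteq> {..<m}" "\<forall>i\<in>S. Suc i \<notin> S" "2 * card S = m + 1" "i < m" "even i"
  shows "i \<in> S"
proof (rule ccontr)
  assume "i \<notin> S"
  have "S = S \<inter> {0..<i} \<union> S \<inter> {Suc i..<m}"
  proof (intro equalityI subsetI)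
    fix j assume "j \<in> S"
    with assms(1) \<open>i \<notin> S\<close> have "j < m" "j \<noteq> i" by auto
    with \<open>j \<in> S\<close> show "j \<in> S \<inter> {0..<i} \<union> S \<inter> {Suc i..<m}" by auto
  qed auto
  then have "card S \<le> card (S \<inter> {0..<i}) + card (S \<inter> {Suc i..<m})"
    by (metis card_Un_le)
  moreover have "2 * card (S \<inter> {0..<i}) \<le> i + 1" "2 * card (S \<inter> {Suc i..<m}) \<le> m - Suc i + 1"
    using assms(2) card_no_consecutive[of _ 0 i] card_no_consecutive[of _ "Suc i" m] by auto
  ultimately show False using assms(3-5) by presburger
qed

text \<open>In the extension step S is the set of positions on the path adjacent to a vertex z
  off the path; the bound on the distance between i and c lets a path from z with that many
  vertices replace the stretch between them.\<close>
lemma far_index_if_no_consecutive: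
  assumes "S \<subseteq> {..<m}" "\<forall>i\<in>S. Suc i \<notin> S" "4 \<le> card S" "c < m"
  obtains i where "i \<in> S" "i + 3 \<le> c" "2 * card S + c \<le> m + 5 + i"
    | i where "i \<in> S" "c + 3 \<le> i" "2 * card S + i \<le> m + 5 + c"
proof -
  define Lo where "Lo = {i\<in>S. i + 3 \<le> c}"
  define Up where "Up = {i\<in>S. c + 3 \<le> i}"
  have "finite S" using assms(1) finite_subset by blast
  then have fin: "finite Lo" "finite Up" unfolding Lo_def Up_def by auto
  consider "Lo \<noteq> {}" | "Up \<noteq> {}" | "Lo = {}" "Up = {}" by blast
  then show thesis
  proof cases
    case 1
    define i where "i = Max Lo"
    have i: "i \<in> S" "i + 3 \<le> c" using Max_in[OF fin(1) 1] unfolding i_def Lo_def by auto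
    have "S \<subseteq> {0..<Suc i} \<union> {c - 2..<m}"
      using assms(1) Max_ge[OF fin(1)] unfolding i_def Lo_def by (force simp: not_le)
    from card_no_consecutive_two_intervals[OF this assms(2)] i assms(4)
    show thesis by (intro that(1)[OF i]) linarith
  next
    case 2
    define i where "i = Min Up"
    have i: "i \<in> S" "c + 3 \<le> i" using Min_in[OF fin(2) 2] unfolding i_def Up_def by auto
    have "i < m" using i assms(1) by auto
    have "S \<subseteq> {0..<c + 3} \<union> {i..<m}"
      using assms(1) Min_le[OF fin(2)] unfolding i_def Up_def by (force simp: not_le)
    from card_no_consecutive_two_intervals[OF this assms(2)] i \<open>i < m\<close>
    show thesis by (intro that(2)[OF i]) linarith
  next
    case 3
    have "S \<subseteq> {c - 2..<c + 3}"
    proof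
      fix j assume "j \<in> S"
      with 3 have "\<not> j + 3 \<le> c" "\<not> c + 3 \<le> j" unfolding Lo_def Up_def by auto
      then show "j \<in> {c - 2..<c + 3}" by simp
    qed
    from card_no_consecutive[OF this assms(2)] assms(3) show thesis by simp
  qed
qed

lemma ex_notin_if_card_less:
  assumes "finite F" "card F < card S"
  shows "\<exists>x\<in>S. x \<notin> F"
proof (rule ccontr)
  assume "\<not> ?thesis"
  then have "card S \<le> card F" by (intro card_mono[OF assms(1)]) blast
  with assms(2) show False by simp
qed

lemma card_neighbours_Un_le:
  "card (neighbours (X \<union> Y) E v) \<le> card (neighbours X E v) + card (neighbours Y E v)"
proof -
  have "neighbours (X \<union> Y) E v = neighbours X E v \<union> neighbours Y E v"
    by (auto simp: neighbours_def)
  then show ?thesis by (simp add: card_Un_le)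
qed

lemma card_neighbours_le_diff:
  assumes "finite X" "finite D"
  shows "card (neighbours X E v) \<le> card (neighbours (X - D) E v) + card D"
proof -
  have "card (neighbours X E v) \<le> card (neighbours ((X - D) \<union> D) E v)"
    by (rule card_mono) (auto simp: neighbours_def assms)
  also have "\<dots> \<le> card (neighbours (X - D) E v) + card (neighbours D E v)"
    by (rule card_neighbours_Un_le)
  also have "card (neighbours D E v) \<le> card D"
    using assms by (intro card_mono) (auto simp: neighbours_def)
  finally show ?thesis by simp
qed

lemma card_common_neighbours:
  assumes "finite R"
  shows "card (neighbours R E a) + card (neighbours R E b)
    \<le> card (neighbours R E a \<inter> neighbours R E b) + card R"
proof -
  have "card (neighbours R E a \<union> neighbours R E b) \<le> card R"
    using assms by (intro card_mono) (auto simp: neighbours_def)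
  then show ?thesis
    using card_Un_Int[of "neighbours R E a" "neighbours R E b"] assms
    by (simp add: neighbours_def)
qed

text \<open>Dirac's condition with surplus s, doubled to stay in nat: every vertex of R has at
  least (|R| + s)/2 neighbours in R.\<close>
definition dirac_surplus :: "'a set \<Rightarrow> ('a \<Rightarrow> 'a \<Rightarrow> bool) \<Rightarrow> nat \<Rightarrow> bool" where
  "dirac_surplus R E s \<longleftrightarrow> (\<forall>v\<in>R. card R + s \<le> 2 * card (neighbours R E v))"

text \<open>Paths are counted by their number of vertices, so 3 is the shortest length possible
  between two arbitrary distinct vertices.\<close>
definition panconnected :: "'a set \<Rightarrow> ('a \<Rightarrow> 'a \<Rightarrow> bool) \<Rightarrow> bool" where
  "panconnected R E \<longleftrightarrow> (\<forall>x\<in>R. \<forall>y\<in>R. x \<noteq> y \<longrightarrow> (\<forall>l. 3 \<le> l \<and> l \<le> card R \<longrightarrow>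
     (\<exists>p. is_path R E p \<and> length p = l \<and> hd p = x \<and> last p = y)))"

lemma panconnectedD:
  assumes "panconnected R E" "x \<in> R" "y \<in> R" "x \<noteq> y" "3 \<le> l" "l \<le> card R"
  shows "\<exists>p. is_path R E p \<and> length p = l \<and> hd p = x \<and> last p = y"
  using assms unfolding panconnected_def by blast

locale undirected =
  fixes E :: "'a \<Rightarrow> 'a \<Rightarrow> bool"
  assumes edge_sym: "E u v \<Longrightarrow> E v u"
    and no_loop: "\<not> E v v"
begin

lemma card_neighbours_less:
  assumes "finite R" "v \<in> R"
  shows "card (neighbours R E v) < card R"
  using assms no_loop by (intro psubset_card_mono) (auto simp: neighbours_def)

lemma dirac_surplus_card:
  assumes "finite R" "dirac_surplus R E s" "v \<in> R"
  shows "s + 2 \<le> card R"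
proof -
  have "card R + s \<le> 2 * card (neighbours R E v)"
    using assms(2,3) unfolding dirac_surplus_def by blast
  with card_neighbours_less[OF assms(1,3)] show ?thesis by linarith
qed

lemma dirac_surplus_common_neighbours:
  assumes "finite R" "dirac_surplus R E s" "a \<in> R" "b \<in> R"
  shows "s \<le> card (neighbours R E a \<inter> neighbours R E b)"
proof -
  have "card R + s \<le> 2 * card (neighbours R E a)" "card R + s \<le> 2 * card (neighbours R E b)"
    using assms(2-4) unfolding dirac_surplus_def by blast+
  with card_common_neighbours[OF assms(1), of E a b] show ?thesis by linarith
qed

lemma path3_if_dirac_surplus:
  assumes R: "finite R" "dirac_surplus R E s" "1 \<le> s" and xy: "x \<in> R" "y \<in> R" "x \<noteq> y"
  shows "\<exists>p. is_path R E p \<and> length p = 3 \<and> hd p = x \<and> last p = y"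
proof -
  have "neighbours R E x \<inter> neighbours R E y \<noteq> {}"
    using dirac_surplus_common_neighbours[OF R(1,2) xy(1,2)] R(3) by auto
  then obtain w where w: "w \<in> R" "E x w" "E y w" by (auto simp: neighbours_def)
  with xy no_loop edge_sym[OF w(3)] have "is_path R E [x, w, y]"
    by (auto simp: is_path_successively)
  then show ?thesis by force
qed

lemma path4_if_dirac_surplus:
  assumes R: "finite R" "dirac_surplus R E s" "2 \<le> s" and xy: "x \<in> R" "y \<in> R" "x \<noteq> y"
  shows "\<exists>p. is_path R E p \<and> length p = 4 \<and> hd p = x \<and> last p = y"
proof -
  have "card R + s \<le> 2 * card (neighbours R E x)"
    using R(2) xy(1) unfolding dirac_surplus_def by blast
  with dirac_surplus_card[OF R(1,2) xy(1)] R(3) have "card {y} < card (neighbours R E x)" by simp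
  then obtain z where "z \<in> neighbours R E x" "z \<noteq> y"
    using ex_notin_if_card_less[of "{y}"] by blast
  then have z: "z \<in> R" "E x z" "z \<noteq> y" by (auto simp: neighbours_def)
  have "card {x} < card (neighbours R E z \<inter> neighbours R E y)"
    using dirac_surplus_common_neighbours[OF R(1,2) z(1) xy(2)] R(3) by simp
  then obtain w where "w \<in> neighbours R E z \<inter> neighbours R E y" "w \<noteq> x"
    using ex_notin_if_card_less[of "{x}"] by blast
  then have w: "w \<in> R" "E z w" "E y w" "w \<noteq> x" by (auto simp: neighbours_def)
  have "x \<noteq> z" "z \<noteq> w" "w \<noteq> y" using z w no_loop by auto
  with xy z w edge_sym[OF w(3)] have "is_path R E [x, z, w, y]"
    by (auto simp: is_path_successively)
  then show ?thesis by force
qed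

end

section \<open>Lengthening a path by one vertex\<close>

locale path_extension = undirected E for E :: "'a \<Rightarrow> 'a \<Rightarrow> bool" +
  fixes R :: "'a set" and P :: "'a list"
  assumes finite_R: "finite R"
    and dense: "dirac_surplus R E 6"
    and path: "is_path R E P"
    and long: "4 \<le> length P"
    and short: "length P < card R"
begin

definition off_path :: "'a set" where
  "off_path = R - set P"

definition anchors :: "'a \<Rightarrow> nat set" where
  "anchors z = {i. i < length P \<and> E z (P ! i)}"

definition extendable :: bool where
  "extendable \<longleftrightarrow> (\<exists>P'. is_path R E P' \<and> length P' = Suc (length P) \<and> hd P' = hd P \<and> last P' = last P)"

definition no_insertion :: bool where
  "no_insertion \<longleftrightarrow> (\<forall>z\<in>off_path. \<forall>i\<in>anchors z. Suc i \<notin> anchors z)"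

lemma distinct_P: "distinct P" and set_P_subset: "set P \<subseteq> R"
  using path by (auto simp: is_path_def)

lemma off_path_subset: "off_path \<subseteq> R"
  by (auto simp: off_path_def)

lemma finite_off_path: "finite off_path"
  using finite_R by (simp add: off_path_def)

lemma card_R: "card R = length P + card off_path"
  using finite_R set_P_subset distinct_card[OF distinct_P] short
  by (simp add: off_path_def card_Diff_subset card_mono)

lemma off_path_nonempty: "off_path \<noteq> {}"
  using card_R short by auto

lemma anchors_subset: "anchors z \<subseteq> {..<length P}"
  by (auto simp: anchors_def)

lemma dense_at: "v \<in> R \<Longrightarrow> card R + 6 \<le> 2 * card (neighbours R E v)"
  using dense by (simp add: dirac_surplus_def)

lemma card_neighbours_on_path: "card (neighbours (set P) E v) \<le> card (anchors v)"
proof -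
  have "neighbours (set P) E v \<subseteq> (!) P ` anchors v"
    by (auto simp: neighbours_def anchors_def in_set_conv_nth)
  then show ?thesis
    using card_mono[OF finite_imageI] card_image_le finite_subset[OF anchors_subset]
    by (metis finite_lessThan le_trans)
qed

lemma R_eq: "R = set P \<union> off_path"
  using set_P_subset by (auto simp: off_path_def)

lemma degree_split_path:
  "card (neighbours R E v) \<le> card (neighbours (set P) E v) + card (neighbours off_path E v)"
  using card_neighbours_Un_le[of "set P" off_path E v] R_eq by simp

lemma degree_split: "card (neighbours R E v) \<le> card (anchors v) + card (neighbours off_path E v)"
  using degree_split_path[of v] card_neighbours_on_path[of v] by linarith

lemma card_neighbours_of_path_vertex:
  assumes "v \<in> set P"
  shows "card (neighbours (set P) E v) < length P"
  using card_neighbours_less[of "set P" v] assms distinct_card[OF distinct_P] by simp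

lemma extendable_by_detour:
  assumes ac: "a < c" "c < length P"
    and Q: "is_path off_path E Q" "length Q = c - a"
    and ends: "E (P ! a) (hd Q)" "E (last Q) (P ! c)"
  shows extendable
proof -
  have Q_R: "is_path R E Q" using Q(1) off_path_subset is_path_mono by blast
  have "set Q \<inter> set P = {}" using Q(1) by (auto simp: is_path_def off_path_def)
  then have disj: "set (take (Suc a) P) \<inter> set Q = {}" "set Q \<inter> set (drop c P) = {}"
    using set_take_subset[of "Suc a" P] set_drop_subset[of c P] by blast+
  have disj': "set (take (Suc a) P) \<inter> set (drop c P) = {}"
    using set_take_disj_set_drop_if_distinct[OF distinct_P, of "Suc a" c] ac by simp
  have Qne: "Q \<noteq> []" using Q(1) by (simp add: is_path_def)
  have last_take: "last (take (Suc a) P) = P ! a"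
    using ac by (simp add: take_Suc_conv_app_nth)
  have hd_drop: "hd (drop c P) = P ! c"
    using ac by (simp add: hd_drop_conv_nth)
  have ne: "take (Suc a) P \<noteq> []" "drop c P \<noteq> []" using ac by auto
  have "is_path R E (Q @ drop c P)"
    using is_path_append[OF Qne ne(2)] is_path_drop[OF path, of c] Q_R disj(2) ends(2) ac hd_drop
    by simp
  then have "is_path R E (take (Suc a) P @ Q @ drop c P)"
    using is_path_append[of "take (Suc a) P" "Q @ drop c P"] is_path_take[OF path, of "Suc a"]
      ne(1) Qne disj(1) disj' ends(1) ac last_take by auto
  moreover have "length (take (Suc a) P @ Q @ drop c P) = Suc (length P)"
    using ac Q(2) by simp
  moreover have "hd (take (Suc a) P @ Q @ drop c P) = hd P"
    using ac by (cases P) auto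
  moreover have "last (take (Suc a) P @ Q @ drop c P) = last P"
    using ac by simp
  ultimately show ?thesis unfolding extendable_def by blast
qed

lemma extendable_if_insertion:
  assumes "\<not> no_insertion"
  shows extendable
proof -
  obtain z i where z: "z \<in> off_path" "i \<in> anchors z" "Suc i \<in> anchors z"
    using assms unfolding no_insertion_def by blast
  then have "Suc i < length P" "E (P ! i) z" "E z (P ! Suc i)"
    by (auto simp: anchors_def intro: edge_sym)
  moreover have "is_path off_path E [z]" using z(1) by (simp add: is_path_def)
  ultimately show ?thesis using extendable_by_detour[of i "Suc i" "[z]"] by simp
qed

lemma card_anchors_if_no_insertion:
  assumes "no_insertion" "z \<in> off_path"
  shows "2 * card (anchors z) \<le> length P + 1"
  using card_no_consecutive[of "anchors z" 0 "length P"] anchors_subset[of z] assms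
  by (simp add: no_insertion_def lessThan_atLeast0)

lemma dirac_surplus_off_path_if_no_insertion:
  assumes "no_insertion"
  shows "dirac_surplus off_path E 5"
  unfolding dirac_surplus_def
proof
  fix z assume z: "z \<in> off_path"
  with off_path_subset have "card R + 6 \<le> 2 * card (neighbours R E z)" using dense_at by blast
  with degree_split[of z] card_anchors_if_no_insertion[OF assms z] card_R
  show "card off_path + 5 \<le> 2 * card (neighbours off_path E z)" by linarith
qed

lemma card_off_path_if_no_insertion:
  assumes "no_insertion"
  shows "7 \<le> card off_path"
  using dirac_surplus_card[OF finite_off_path dirac_surplus_off_path_if_no_insertion[OF assms]]
    off_path_nonempty by fastforce

lemma extendable_if_even_anchors_odd_attached:
  assumes "no_insertion" "z \<in> off_path" "\<forall>i<length P. even i \<longrightarrow> E z (P ! i)"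
    and "odd (length P)" "j < length P" "odd j" "w \<in> off_path" "E w (P ! j)"
  shows extendable
proof -
  have "w \<noteq> z"
  proof
    assume "w = z"
    with assms(3,5,6,8) have "j - 1 \<in> anchors z" "Suc (j - 1) \<in> anchors z"
      by (auto simp: anchors_def)
    with assms(1,2) show False by (auto simp: no_insertion_def)
  qed
  note path3 = path3_if_dirac_surplus[OF finite_off_path dirac_surplus_off_path_if_no_insertion[OF assms(1)]]
  have "E (P ! j) w" using assms(8) by (rule edge_sym)
  show ?thesis
  proof (cases "j + 3 < length P")
    case True
    with assms(3,6) have "E z (P ! (j + 3))" by simp
    moreover obtain Q where "is_path off_path E Q" "length Q = 3" "hd Q = w" "last Q = z"
      using path3[OF _ assms(7,2) \<open>w \<noteq> z\<close>] by auto
    ultimately show ?thesis using extendable_by_detour[of j "j + 3" Q] True \<open>E (P ! j) w\<close> by simp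
  next
    case False
    with assms(4,6) long have "3 \<le> j" by presburger
    with assms(3,5,6) have "E (P ! (j - 3)) z" by (auto intro: edge_sym)
    moreover obtain Q where "is_path off_path E Q" "length Q = 3" "hd Q = z" "last Q = w"
      using path3[OF _ assms(2,7) \<open>w \<noteq> z\<close>[symmetric]] by auto
    ultimately show ?thesis using extendable_by_detour[of "j - 3" j Q] \<open>3 \<le> j\<close> assms(5,8) by simp
  qed
qed

lemma long_if_path_vertex_unattached:
  assumes "v \<in> set P" "\<forall>w\<in>off_path. \<not> E w v"
  shows "card R + 8 \<le> 2 * length P"
proof -
  have "neighbours off_path E v = {}"
    using assms(2) by (auto simp: neighbours_def dest: edge_sym)
  then have "card (neighbours R E v) < length P"
    using degree_split_path[of v] card_neighbours_of_path_vertex[OF assms(1)] by simp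
  with dense_at[of v] assms(1) set_P_subset show ?thesis by fastforce
qed

lemma extendable_if_even_anchors_odd_unattached:
  assumes "no_insertion" "z \<in> off_path" "\<forall>i<length P. even i \<longrightarrow> E z (P ! i)"
    and odd_free: "\<forall>j<length P. odd j \<longrightarrow> (\<forall>w\<in>off_path. \<not> E w (P ! j))"
  shows extendable
proof -
  have W7: "7 \<le> card off_path" using card_off_path_if_no_insertion[OF assms(1)] .
  have "P ! 1 \<in> set P" "\<forall>w\<in>off_path. \<not> E w (P ! 1)" using long odd_free by auto
  then have "card R + 8 \<le> 2 * length P" by (rule long_if_path_vertex_unattached)
  then have m: "card off_path + 8 \<le> length P" using card_R by simp
  obtain w where w: "w \<in> off_path" "w \<noteq> z"
    using ex_notin_if_card_less[of "{z}" off_path] W7 by auto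
  have "card R + 6 \<le> 2 * card (neighbours R E w)" using w(1) off_path_subset dense_at by blast
  with degree_split[of w] card_neighbours_less[OF finite_off_path w(1)] card_R m
  have "0 < card (anchors w)" by linarith
  then obtain e where "e \<in> anchors w" by (metis card_gt_0_iff ex_in_conv)
  then have e: "e < length P" "E w (P ! e)" "E (P ! e) w" by (auto simp: anchors_def intro: edge_sym)
  with odd_free w(1) have "even e" by blast
  note path4 = path4_if_dirac_surplus[OF finite_off_path dirac_surplus_off_path_if_no_insertion[OF assms(1)]]
  show ?thesis
  proof (cases "e + 4 < length P")
    case True
    with assms(3) \<open>even e\<close> have "E z (P ! (e + 4))" by simp
    moreover obtain Q where "is_path off_path E Q" "length Q = 4" "hd Q = w" "last Q = z"
      using path4[OF _ w(1) assms(2) w(2)] by auto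
    ultimately show ?thesis using extendable_by_detour[of e "e + 4" Q] True e(3) by simp
  next
    case False
    with m W7 have "4 \<le> e" by linarith
    with assms(3) e(1) \<open>even e\<close> have "E (P ! (e - 4)) z" by (auto intro: edge_sym)
    moreover obtain Q where "is_path off_path E Q" "length Q = 4" "hd Q = z" "last Q = w"
      using path4[OF _ assms(2) w(1) w(2)[symmetric]] by auto
    ultimately show ?thesis using extendable_by_detour[of "e - 4" e Q] \<open>4 \<le> e\<close> e by simp
  qed
qed

lemma extendable_if_anchors_full:
  assumes "no_insertion" "z \<in> off_path" "2 * card (anchors z) = length P + 1"
  shows extendable
proof -
  have "\<forall>i\<in>anchors z. Suc i \<notin> anchors z" using assms(1,2) unfolding no_insertion_def by blast
  from even_mem_if_no_consecutive[OF anchors_subset this assms(3)]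
  have even_anchors: "\<forall>i<length P. even i \<longrightarrow> E z (P ! i)" by (simp add: anchors_def)
  show ?thesis
  proof (cases "\<exists>j<length P. odd j \<and> (\<exists>w\<in>off_path. E w (P ! j))")
    case True
    moreover have "odd (length P)" using assms(3) by presburger
    ultimately show ?thesis
      using extendable_if_even_anchors_odd_attached[OF assms(1,2) even_anchors] by blast
  next
    case False
    then show ?thesis
      using extendable_if_even_anchors_odd_unattached[OF assms(1,2) even_anchors] by blast
  qed
qed

lemma dirac_surplus_off_path_if_anchors_small:
  assumes "\<forall>z\<in>off_path. 2 * card (anchors z) \<le> length P"
  shows "dirac_surplus off_path E 6"
  unfolding dirac_surplus_def
proof
  fix z assume z: "z \<in> off_path"
  with off_path_subset have "card R + 6 \<le> 2 * card (neighbours R E z)" using dense_at by blast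
  with degree_split[of z] assms z card_R
  show "card off_path + 6 \<le> 2 * card (neighbours off_path E z)" by fastforce
qed

lemma extendable_if_short:
  assumes "dirac_surplus off_path E 6" "2 * length P \<le> card R + 4"
  shows extendable
proof -
  have attached: "1 < card (neighbours off_path E v)" if "v \<in> set P" for v
  proof -
    have "card R + 6 \<le> 2 * card (neighbours R E v)" using that set_P_subset dense_at by blast
    with degree_split_path[of v] card_neighbours_of_path_vertex[OF that] assms(2)
    show ?thesis by simp
  qed
  have "P ! 0 \<in> set P" "P ! 3 \<in> set P" using long by (auto intro!: nth_mem)
  from attached[OF this(1)] have "neighbours off_path E (P ! 0) \<noteq> {}" by auto
  then obtain z where "z \<in> neighbours off_path E (P ! 0)" by blast
  then have z: "z \<in> off_path" "E (P ! 0) z" by (auto simp: neighbours_def)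
  from attached[OF \<open>P ! 3 \<in> set P\<close>] have "card {z} < card (neighbours off_path E (P ! 3))" by simp
  then obtain z' where "z' \<in> neighbours off_path E (P ! 3)" "z' \<noteq> z"
    using ex_notin_if_card_less[of "{z}"] by blast
  then have z': "z' \<in> off_path" "E z' (P ! 3)" "z \<noteq> z'" by (auto simp: neighbours_def intro: edge_sym)
  obtain Q where "is_path off_path E Q" "length Q = 3" "hd Q = z" "last Q = z'"
    using path3_if_dirac_surplus[OF finite_off_path assms(1) _ z(1) z'(1,3)] by auto
  with z(2) z'(2) long show ?thesis using extendable_by_detour[of 0 3 Q] by simp
qed

lemma extendable_if_long:
  assumes "panconnected off_path E" "no_insertion" "card R + 4 < 2 * length P"
  shows extendable
proof -
  have many_anchors: "length P + 8 \<le> 2 * card (anchors w) + card off_path" if "w \<in> off_path" for w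
  proof -
    have "card R + 6 \<le> 2 * card (neighbours R E w)" using that off_path_subset dense_at by blast
    with degree_split[of w] card_neighbours_less[OF finite_off_path that] card_R
    show ?thesis by linarith
  qed
  obtain z where z: "z \<in> off_path" using off_path_nonempty by blast
  have "card {z} < card off_path" using card_off_path_if_no_insertion[OF assms(2)] by simp
  then obtain z' where z': "z' \<in> off_path" "z' \<noteq> z"
    using ex_notin_if_card_less[of "{z}"] by blast
  have "0 < card (anchors z')" using many_anchors[OF z'(1)] card_R assms(3) by linarith
  then obtain c where "c \<in> anchors z'" by (metis card_gt_0_iff ex_in_conv)
  then have c: "c < length P" "E z' (P ! c)" by (auto simp: anchors_def)
  have "\<forall>i\<in>anchors z. Suc i \<notin> anchors z" using assms(2) z unfolding no_insertion_def by blast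
  moreover have "4 \<le> card (anchors z)" using many_anchors[OF z] card_R assms(3) by linarith
  ultimately show ?thesis
  proof (rule far_index_if_no_consecutive[OF anchors_subset _ _ c(1)])
    fix i assume i: "i \<in> anchors z" "i + 3 \<le> c" "2 * card (anchors z) + c \<le> length P + 5 + i"
    with many_anchors[OF z] have "3 \<le> c - i" "c - i \<le> card off_path" by linarith+
    then obtain Q where "is_path off_path E Q" "length Q = c - i" "hd Q = z" "last Q = z'"
      using panconnectedD[OF assms(1) z z'(1) z'(2)[symmetric], of "c - i"] by auto
    moreover have "E (P ! i) z" using i(1) by (auto simp: anchors_def intro: edge_sym)
    ultimately show ?thesis using extendable_by_detour[of i c Q] i(2) c by simp
  next
    fix i assume i: "i \<in> anchors z" "c + 3 \<le> i" "2 * card (anchors z) + i \<le> length P + 5 + c"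
    with many_anchors[OF z] have "3 \<le> i - c" "i - c \<le> card off_path" by linarith+
    then obtain Q where "is_path off_path E Q" "length Q = i - c" "hd Q = z'" "last Q = z"
      using panconnectedD[OF assms(1) z'(1) z z'(2), of "i - c"] by auto
    moreover have "E (P ! c) z'" using c(2) by (rule edge_sym)
    moreover have "i < length P" "E z (P ! i)" using i(1) by (auto simp: anchors_def)
    ultimately show ?thesis using extendable_by_detour[of c i Q] i(2) by simp
  qed
qed

lemma extendable_if_off_path_panconnected:
  assumes "dirac_surplus off_path E 6 \<Longrightarrow> panconnected off_path E"
  shows extendable
proof (cases no_insertion)
  case False
  then show ?thesis by (rule extendable_if_insertion)
next
  case True
  show ?thesis
  proof (cases "\<exists>z\<in>off_path. 2 * card (anchors z) = length P + 1")
    case True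
    with \<open>no_insertion\<close> show ?thesis using extendable_if_anchors_full by blast
  next
    case False
    with card_anchors_if_no_insertion[OF \<open>no_insertion\<close>]
    have "\<forall>z\<in>off_path. 2 * card (anchors z) \<le> length P" by (metis le_Suc_eq Suc_eq_plus1)
    then have W6: "dirac_surplus off_path E 6" by (rule dirac_surplus_off_path_if_anchors_small)
    with assms have "panconnected off_path E" .
    then show ?thesis
      using extendable_if_short[OF W6] extendable_if_long[OF _ \<open>no_insertion\<close>] by linarith
  qed
qed

end

section \<open>Dense graphs are panconnected\<close>

context undirected
begin

lemma longer_path_if_dirac_surplus:
  assumes "finite R" "dirac_surplus R E 6"
    and IH: "\<And>W. W \<subset> R \<Longrightarrow> dirac_surplus W E 6 \<Longrightarrow> panconnected W E"
    and P: "is_path R E P" "4 \<le> length P" "length P < card R"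
  shows "\<exists>P'. is_path R E P' \<and> length P' = Suc (length P) \<and> hd P' = hd P \<and> last P' = last P"
proof -
  interpret path_extension E R P
    using assms by unfold_locales
  have "hd P \<in> R - off_path"
    using P(1) by (auto simp: off_path_def is_path_def)
  with off_path_subset have "off_path \<subset> R" by blast
  with IH have "extendable" by (intro extendable_if_off_path_panconnected)
  then show ?thesis unfolding extendable_def .
qed

theorem panconnected_if_dirac_surplus:
  assumes "finite R" "dirac_surplus R E 6"
  shows "panconnected R E"
  using assms
proof (induction "card R" arbitrary: R rule: less_induct)
  case less
  have IH: "panconnected W E" if "W \<subset> R" "dirac_surplus W E 6" for W
    using less.hyps[of W] that less.prems(1) psubset_card_mono finite_subset by blast
  show ?case unfolding panconnected_def
  proof (intro ballI impI allI)
    fix x y l assume xy: "x \<in> R" "y \<in> R" "x \<noteq> y" and l: "3 \<le> l \<and> l \<le> card R"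
    show "\<exists>p. is_path R E p \<and> length p = l \<and> hd p = x \<and> last p = y"
    proof (cases "l = 3")
      case True
      then show ?thesis using path3_if_dirac_surplus[OF less.prems _ xy] by simp
    next
      case False
      with l have "4 \<le> l" "l \<le> card R" by auto
      then show ?thesis
      proof (induction l rule: nat_induct_at_least)
        case base
        then show ?case using path4_if_dirac_surplus[OF less.prems _ xy] by simp
      next
        case (Suc n)
        then obtain P where P: "is_path R E P" "length P = n" "hd P = x" "last P = y" by auto
        with Suc.hyps Suc.prems show ?case
          using longer_path_if_dirac_surplus[OF less.prems IH P(1)] by auto
      qed
    qed
  qed
qed

end

section \<open>Spaced vertices on paths and cycles\<close>

definition spaced :: "nat \<Rightarrow> 'a list \<Rightarrow> 'a set \<Rightarrow> bool" where
  "spaced d p S \<longleftrightarrow> (\<forall>i j. i < j \<and> j < length p \<and> p ! i \<in> S \<and> p ! j \<in> S \<longrightarrow> i + d \<le> j)"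

lemma spaced_mono: "spaced d p S \<Longrightarrow> S' \<subseteq> S \<Longrightarrow> spaced d p S'"
  unfolding spaced_def by blast

lemma spaced_if_dvd:
  assumes "\<forall>k<length p. p ! k \<in> S \<longrightarrow> d dvd k"
  shows "spaced d p S"
  unfolding spaced_def
proof (intro allI impI)
  fix i j assume ij: "i < j \<and> j < length p \<and> p ! i \<in> S \<and> p ! j \<in> S"
  with assms obtain a b where ab: "i = d * a" "j = d * b" by (meson dvd_def order.strict_trans)
  with ij have "Suc a \<le> b" by (simp add: Suc_le_eq)
  then have "d * Suc a \<le> d * b" by (rule mult_le_mono2)
  with ab show "i + d \<le> j" by simp
qed

lemma positions_dvd_4_append:
  assumes "\<forall>i<length C. C ! i \<in> S \<longleftrightarrow> 4 dvd i" "b \<in> S" "w \<notin> S" "c \<notin> S" "f \<notin> S"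
  shows "\<forall>i<length ([b, w, c, f] @ C). ([b, w, c, f] @ C) ! i \<in> S \<longleftrightarrow> 4 dvd i"
proof (intro allI impI)
  fix i assume i: "i < length ([b, w, c, f] @ C)"
  show "([b, w, c, f] @ C) ! i \<in> S \<longleftrightarrow> 4 dvd i"
  proof (cases "i < 4")
    case True
    then have "i = 0 \<or> i = 1 \<or> i = 2 \<or> i = 3" by auto
    with assms(2-5) show ?thesis by auto
  next
    case False
    define j where "j = i - 4"
    with False have "i = j + 4" by simp
    with i have "j < length C" "([b, w, c, f] @ C) ! i = C ! j" by (simp_all add: nth_append)
    moreover have "4 dvd i \<longleftrightarrow> 4 dvd j" using \<open>i = j + 4\<close> by presburger
    ultimately show ?thesis using assms(1) by simp
  qed
qed

lemma spaced_append:
  assumes "spaced d p S" "spaced d q S" "\<forall>i<length p. p ! i \<in> S \<longrightarrow> i + d \<le> length p"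
  shows "spaced d (p @ q) S"
  unfolding spaced_def
proof (intro allI impI)
  fix i j assume ij: "i < j \<and> j < length (p @ q) \<and> (p @ q) ! i \<in> S \<and> (p @ q) ! j \<in> S"
  consider "j < length p" | "length p \<le> i" | "i < length p" "length p \<le> j" by linarith
  then show "i + d \<le> j"
  proof cases
    case 1
    with ij assms(1) show ?thesis by (auto simp: spaced_def nth_append)
  next
    case 2
    with ij have "i - length p < j - length p" "j - length p < length q"
      "q ! (i - length p) \<in> S" "q ! (j - length p) \<in> S" by (auto simp: nth_append)
    with assms(2) have "i - length p + d \<le> j - length p" unfolding spaced_def by blast
    with 2 ij show ?thesis by linarith
  next
    case 3
    with ij assms(3) show ?thesis by (auto simp: nth_append)
  qed
qed

lemma spaced_if_ends:
  assumes "distinct p" "set p \<inter> S \<subseteq> {hd p, last p}" "d < length p"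
  shows "spaced d p S"
  unfolding spaced_def
proof (intro allI impI)
  fix i j assume ij: "i < j \<and> j < length p \<and> p ! i \<in> S \<and> p ! j \<in> S"
  have ends: "k = 0 \<or> k = length p - 1" if "k < length p" "p ! k \<in> S" for k
  proof -
    have "p \<noteq> []" using assms(3) by auto
    moreover have "p ! k \<in> {hd p, last p}" using assms(2) nth_mem[OF that(1)] that(2) by blast
    ultimately have "p ! k = p ! 0 \<or> p ! k = p ! (length p - 1)"
      by (auto simp: hd_conv_nth last_conv_nth)
    with assms(3) \<open>p \<noteq> []\<close> show ?thesis
      using nth_eq_iff_index_eq[OF assms(1) that(1), of 0]
        nth_eq_iff_index_eq[OF assms(1) that(1), of "length p - 1"] by auto
  qed
  from ij ends[of i] ends[of j] assms(3) show "i + d \<le> j" by auto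
qed

lemma path_sparse4_if_spaced:
  assumes "spaced 4 p S"
  shows "path_sparse4 p S"
  unfolding path_sparse4_def
proof (intro allI impI)
  fix i assume i: "i + 3 < length p"
  have "a = b" if "a \<in> (\<lambda>j. p ! (i + j)) ` {..<4} \<inter> S" "b \<in> (\<lambda>j. p ! (i + j)) ` {..<4} \<inter> S" for a b
  proof -
    from that obtain j1 j2 where j: "j1 < 4" "j2 < 4" "a = p ! (i + j1)" "b = p ! (i + j2)" "a \<in> S" "b \<in> S"
      by auto
    have "\<not> j1' < j2'" if "j1' < 4" "j2' < 4" "p ! (i + j1') \<in> S" "p ! (i + j2') \<in> S" for j1' j2'
    proof
      assume "j1' < j2'"
      with that i have "i + j1' < i + j2' \<and> i + j2' < length p \<and> p ! (i + j1') \<in> S \<and> p ! (i + j2') \<in> S"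
        by simp
      with assms have "i + j1' + 4 \<le> i + j2'" unfolding spaced_def by blast
      with that(2) show False by simp
    qed
    with j have "j1 = j2" by (meson linorder_neqE_nat)
    with j show "a = b" by simp
  qed
  then show "card ((\<lambda>j. p ! (i + j)) ` {..<4} \<inter> S) \<le> 1"
    by (simp add: card_le_Suc0_iff_eq)
qed

lemma spaced_inner_position:
  assumes "spaced d p (S \<union> {hd p, last p})" "hd p \<notin> S" "last p \<notin> S" "k < length p" "p ! k \<in> S"
  shows "d \<le> k \<and> k + d < length p"
proof -
  have sp: "i + d \<le> j" if "i < j" "j < length p" "p ! i \<in> S \<union> {hd p, last p}"
    "p ! j \<in> S \<union> {hd p, last p}" for i j
    using assms(1) that unfolding spaced_def by blast
  have ne: "p \<noteq> []" using assms(4) by auto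
  then have ends: "p ! 0 = hd p" "p ! (length p - 1) = last p" by (simp_all add: hd_conv_nth last_conv_nth)
  have "k \<noteq> 0" "k \<noteq> length p - 1" using assms(2,3,5) ends by metis+
  with assms(4) have "0 < k" "k < length p - 1" by linarith+
  with sp[of 0 k] sp[of k "length p - 1"] ends assms(4,5) show ?thesis by fastforce
qed

lemma cycle_sparse4_if_disjoint: "set c \<inter> S = {} \<Longrightarrow> cycle_sparse4 c S"
  unfolding cycle_sparse4_def
proof (intro allI impI)
  fix i assume "set c \<inter> S = {}" "i < length c"
  then have "0 < length c" by linarith
  then have "(\<lambda>j. c ! ((i + j) mod length c)) ` {..<4} \<subseteq> set c" by (auto intro!: nth_mem)
  with \<open>set c \<inter> S = {}\<close> have "(\<lambda>j. c ! ((i + j) mod length c)) ` {..<4} \<inter> S = {}" by blast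
  then show "card ((\<lambda>j. c ! ((i + j) mod length c)) ` {..<4} \<inter> S) \<le> 1" by simp
qed

text \<open>Since no vertex of S lies within distance 4 of either end of p, a window of four
  cyclically consecutive positions that wraps around contains no vertex of S at all.\<close>
lemma cycle_sparse4_if_spaced:
  assumes "spaced 4 p S" "\<forall>k<length p. p ! k \<in> S \<longrightarrow> 4 \<le> k \<and> k + 4 < length p"
  shows "cycle_sparse4 p S"
  unfolding cycle_sparse4_def
proof (intro allI impI)
  fix i assume i: "i < length p"
  let ?W = "(\<lambda>j. p ! ((i + j) mod length p)) ` {..<4}"
  show "card (?W \<inter> S) \<le> 1"
  proof (cases "i + 3 < length p")
    case True
    then have "?W = (\<lambda>j. p ! (i + j)) ` {..<4}" by (intro image_cong) auto
    with True path_sparse4_if_spaced[OF assms(1)] show ?thesis unfolding path_sparse4_def by simp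
  next
    case False
    have "p ! ((i + j) mod length p) \<notin> S" if "j < 4" for j
    proof
      assume in_S: "p ! ((i + j) mod length p) \<in> S"
      have "(i + j) mod length p < length p" using i by (intro mod_less_divisor) linarith
      with assms(2) in_S have bounds: "4 \<le> (i + j) mod length p" "(i + j) mod length p + 4 < length p"
        by blast+
      show False
      proof (cases "i + j < length p")
        case True
        with bounds(2) False show False by simp
      next
        case False
        moreover have "i + j - length p < length p" using bounds(2) i \<open>j < 4\<close> by linarith
        ultimately have "(i + j) mod length p = i + j - length p"
          by (simp add: le_mod_geq)
        with bounds(1) i \<open>j < 4\<close> show False by linarith
      qed
    qed
    then have "?W \<inter> S = {}" by auto
    then show ?thesis by simp
  qed
qed

section \<open>Graphs with a small exceptional set\<close>

locale exceptional_graph =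
  fixes V :: "'a set" and E :: "'a \<Rightarrow> 'a \<Rightarrow> bool" and B :: "'a set"
  assumes graph: "simple_graph V E"
    and B_subset: "B \<subseteq> V"
    and small_B: "100 * card B \<le> card V"
    and degree_B: "\<forall>v\<in>B. 4 * card B + 2 \<le> card (neighbours V E v)"
    and degree_A: "\<forall>v\<in>V - B. card V + 10 * card B + 10 \<le> 2 * card (neighbours V E v)"

sublocale exceptional_graph \<subseteq> undirected E
  using graph by unfold_locales (auto simp: simple_graph_def)

context exceptional_graph
begin

abbreviation A :: "'a set" where
  "A \<equiv> V - B"

lemma finite_V: "finite V"
  using graph by (simp add: simple_graph_def)

lemma finite_B: "finite B"
  using finite_V B_subset finite_subset by blast

lemma card_A: "card A + card B = card V"
  using card_Diff_subset[OF finite_B B_subset] card_mono[OF finite_V B_subset] by simp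

lemma degree_in_A:
  assumes "v \<in> A"
  shows "card V + 8 * card B + 10 \<le> 2 * card (neighbours A E v)"
proof -
  have "card V + 10 * card B + 10 \<le> 2 * card (neighbours V E v)" using degree_A assms by blast
  with card_neighbours_le_diff[OF finite_V finite_B, of E v] show ?thesis by linarith
qed

lemma degree_in_A_of_B:
  assumes "v \<in> B"
  shows "3 * card B + 3 \<le> card (neighbours A E v)"
proof -
  have "neighbours (V - (B - {v})) E v = neighbours A E v"
    using no_loop by (auto simp: neighbours_def)
  with card_neighbours_le_diff[OF finite_V, of "B - {v}" E v] finite_B
  have "card (neighbours V E v) \<le> card (neighbours A E v) + card (B - {v})" by simp
  moreover have "card (B - {v}) + 1 = card B" using card_Suc_Diff1[OF finite_B assms] by simp
  moreover have "4 * card B + 2 \<le> card (neighbours V E v)" using degree_B assms by blast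
  ultimately show ?thesis by linarith
qed

lemma degree_into_A:
  assumes "v \<in> V"
  shows "3 * card B + 3 \<le> card (neighbours A E v)"
proof (cases "v \<in> B")
  case False
  with assms degree_in_A[of v] small_B show ?thesis by simp
qed (rule degree_in_A_of_B)

lemma common_neighbours_in_A:
  assumes "a \<in> A" "a' \<in> A"
  shows "9 * card B + 10 \<le> card (neighbours A E a \<inter> neighbours A E a')"
  using card_common_neighbours[of A E a a'] finite_V degree_in_A[OF assms(1)] degree_in_A[OF assms(2)]
    card_A by simp

lemma dirac_surplus_A_diff:
  assumes "finite D" "card D \<le> 3 * card B + 1"
  shows "dirac_surplus (A - D) E 6"
  unfolding dirac_surplus_def
proof
  fix v assume v: "v \<in> A - D"
  have "card (A - D) \<le> card A" using finite_V by (intro card_mono) auto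
  with degree_in_A[of v] v card_neighbours_le_diff[of A D E v] finite_V assms card_A
  show "card (A - D) + 6 \<le> 2 * card (neighbours (A - D) E v)" by fastforce
qed

lemma dirac_surplus_A: "dirac_surplus A E 6"
  using dirac_surplus_A_diff[of "{}"] by simp

lemma panconnected_A: "panconnected A E"
  using panconnected_if_dirac_surplus[OF _ dirac_surplus_A] finite_V by simp

text \<open>A chain is built backwards from y: blocks b w c f with b in B and w, c, f in A are
  prepended, so that the vertices of B \<union> {y} on it are exactly those at positions
  divisible by 4.\<close>
definition block_chain :: "'a \<Rightarrow> 'a \<Rightarrow> nat \<Rightarrow> 'a list \<Rightarrow> bool" where
  "block_chain x y k C \<longleftrightarrow> is_path V E C \<and> length C = 4 * k + 1 \<and> last C = y \<and> x \<notin> set C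
     \<and> card (set C \<inter> B) = k \<and> (\<forall>i<length C. C ! i \<in> B \<union> {y} \<longleftrightarrow> 4 dvd i)"

lemma block_chain_card_Diff:
  assumes "block_chain x y k C"
  shows "card (set C - B) = 3 * k + 1"
proof -
  have "distinct C" "length C = 4 * k + 1" "card (set C \<inter> B) = k"
    using assms by (auto simp: block_chain_def is_path_def)
  then show ?thesis by (simp add: distinct_card card_Diff_subset_Int)
qed

lemma block_vertices:
  assumes "finite F" "card F \<le> 3 * card B + 1" "b \<in> B" "h \<in> V"
  obtains w c f where "w \<in> A - F" "c \<in> A - F" "f \<in> A - F" "E b w" "E w c" "E c f" "E f h"
    "w \<noteq> c" "w \<noteq> f" "c \<noteq> f"
proof -
  have "card F < card (neighbours A E b)" using degree_in_A_of_B[OF assms(3)] assms(2) by linarith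
  then obtain w where w: "w \<in> neighbours A E b" "w \<notin> F"
    using ex_notin_if_card_less[OF assms(1)] by blast
  have "card (insert w F) < card (neighbours A E h)"
    using degree_into_A[OF assms(4)] assms(1,2) by (simp add: card_insert_if)
  then obtain f where f: "f \<in> neighbours A E h" "f \<notin> insert w F"
    using ex_notin_if_card_less[of "insert w F"] assms(1) by blast
  have "w \<in> A" "f \<in> A" using w(1) f(1) by (auto simp: neighbours_def)
  then have "card F < card (neighbours A E w \<inter> neighbours A E f)"
    using common_neighbours_in_A assms(2) by fastforce
  then obtain c where c: "c \<in> neighbours A E w \<inter> neighbours A E f" "c \<notin> F"
    using ex_notin_if_card_less[OF assms(1)] by blast
  have "E c f" "E f h" using c(1) f(1) by (auto simp: neighbours_def intro: edge_sym)
  moreover have "w \<noteq> c" "c \<noteq> f" using c(1) no_loop by (auto simp: neighbours_def)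
  ultimately show thesis
    using that w f c by (auto simp: neighbours_def)
qed

lemma block_chain_Cons:
  assumes "block_chain x y k C" "k < card B" "x \<notin> B"
  shows "\<exists>C'. block_chain x y (Suc k) C'"
proof -
  have C: "is_path V E C" "last C = y" "x \<notin> set C" "card (set C \<inter> B) = k"
    "\<forall>i<length C. C ! i \<in> B \<union> {y} \<longleftrightarrow> 4 dvd i"
    using assms(1) by (auto simp: block_chain_def)
  have Cne: "C \<noteq> []" and hd_C: "hd C \<in> V" and y_C: "y \<in> set C"
    using C(1,2) by (auto simp: is_path_def)
  obtain b where b: "b \<in> B" "b \<notin> set C"
    using ex_notin_if_card_less[of "set C \<inter> B" B] C(4) assms(2) by auto
  define F where "F = (set C - B) \<union> {x}"
  have "card F \<le> 3 * card B + 1"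
    using card_Un_le[of "set C - B" "{x}"] block_chain_card_Diff[OF assms(1)] assms(2)
    unfolding F_def by simp
  then obtain w c f where wcf: "w \<in> A - F" "c \<in> A - F" "f \<in> A - F" "E b w" "E w c" "E c f"
    "E f (hd C)" "w \<noteq> c" "w \<noteq> f" "c \<noteq> f"
    using block_vertices[of F b "hd C"] b(1) hd_C unfolding F_def by blast
  then have new: "w \<notin> set C" "c \<notin> set C" "f \<notin> set C" "x \<notin> {b, w, c, f}"
    using b C(3) assms(3) unfolding F_def by auto
  let ?C' = "[b, w, c, f] @ C"
  have "is_path V E [b, w, c, f]"
    using b(1) B_subset wcf by (auto simp: is_path_successively)
  with is_path_append[of "[b, w, c, f]" C V E] C(1) Cne new b wcf(7) have "is_path V E ?C'"
    by simp
  moreover have "set ?C' \<inter> B = insert b (set C \<inter> B)" using wcf b(1) by auto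
  then have "card (set ?C' \<inter> B) = Suc k" using b C(4) by simp
  moreover have "b \<in> B \<union> {y}" "w \<notin> B \<union> {y}" "c \<notin> B \<union> {y}" "f \<notin> B \<union> {y}"
    using b(1) wcf new(1-3) y_C by auto
  note positions_dvd_4_append[OF C(5) this]
  ultimately show ?thesis
    using assms(1) C(2,3) Cne new unfolding block_chain_def by (intro exI[of _ ?C']) auto
qed

lemma block_chain_exists:
  assumes "x \<in> A" "y \<in> A" "x \<noteq> y" "k \<le> card B"
  shows "\<exists>C. block_chain x y k C"
  using assms(4)
proof (induction k)
  case 0
  have "block_chain x y 0 [y]" using assms(1-3) by (simp add: block_chain_def is_path_def)
  then show ?case ..
next
  case (Suc k)
  then show ?case using block_chain_Cons assms(1) by (meson DiffD2 Suc_le_lessD less_imp_le_nat)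
qed

lemma path_into_chain:
  assumes C: "block_chain x y k C" and "x \<in> A" "1 \<le> k" "k \<le> card B"
  shows "\<exists>Q. is_path (A - set C) E Q \<and> length Q + 3 * k + 1 = card A \<and> 4 \<le> length Q
    \<and> hd Q = x \<and> E (last Q) (hd C)"
proof -
  have hd_C: "hd C \<in> V" and "x \<notin> set C" using C by (auto simp: block_chain_def is_path_def)
  define D where "D = set C - B"
  have D: "finite D" "card D = 3 * k + 1" "D \<subseteq> A"
    using block_chain_card_Diff[OF C] C by (auto simp: D_def block_chain_def is_path_def)
  have R_eq: "A - set C = A - D" by (auto simp: D_def)
  have card_R: "card (A - D) + 3 * k + 1 = card A"
    using card_Diff_subset[OF D(1,3)] card_mono[OF _ D(3)] finite_V D(2) by simp
  have "4 \<le> card (A - D)" using card_R card_A small_B assms(3,4) by linarith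
  have "card (D \<union> {x}) < card (neighbours A E (hd C))"
    using card_Un_le[of D "{x}"] D(2) assms(4) degree_into_A[OF hd_C] by simp
  then obtain a where a: "a \<in> neighbours A E (hd C)" "a \<notin> D \<union> {x}"
    using ex_notin_if_card_less[of "D \<union> {x}"] D(1) by blast
  then have a': "a \<in> A - D" "a \<noteq> x" "E a (hd C)" by (auto simp: neighbours_def intro: edge_sym)
  have "x \<in> A - D" using assms(2) \<open>x \<notin> set C\<close> by (simp add: D_def)
  have "panconnected (A - D) E"
    using panconnected_if_dirac_surplus dirac_surplus_A_diff[OF D(1)] D(2) assms(4) finite_V by simp
  from panconnectedD[OF this \<open>x \<in> A - D\<close> a'(1) a'(2)[symmetric], of "card (A - D)"] \<open>4 \<le> card (A - D)\<close>
  obtain Q where "is_path (A - D) E Q" "length Q = card (A - D)" "hd Q = x" "last Q = a" by auto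
  with a'(3) card_R \<open>4 \<le> card (A - D)\<close> show ?thesis unfolding R_eq by auto
qed

text \<open>A Hamiltonian path of A minus the chain, from x to a neighbour of the head of the
  chain, is followed by the chain; each block of the chain adds one vertex of B.\<close>
lemma long_spaced_path:
  assumes xy: "x \<in> A" "y \<in> A" "x \<noteq> y" and k: "1 \<le> k" "k \<le> card B"
  shows "\<exists>p. is_path V E p \<and> length p = card A + k \<and> hd p = x \<and> last p = y
    \<and> spaced 4 p (B \<union> {x, y})"
proof -
  obtain C where C: "block_chain x y k C" using block_chain_exists[OF xy k(2)] ..
  then have C': "is_path V E C" "length C = 4 * k + 1" "last C = y" "x \<notin> set C"
    "\<forall>i<length C. C ! i \<in> B \<union> {y} \<longleftrightarrow> 4 dvd i"
    by (auto simp: block_chain_def)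
  have Cne: "C \<noteq> []" and y_C: "y \<in> set C" using C'(1,3) by (auto simp: is_path_def)
  obtain Q where Q: "is_path (A - set C) E Q" "length Q + 3 * k + 1 = card A" "4 \<le> length Q"
    "hd Q = x" "E (last Q) (hd C)"
    using path_into_chain[OF C xy(1) k] by blast
  have Qne: "Q \<noteq> []" and QR: "set Q \<subseteq> A - set C" and dQ: "distinct Q"
    using Q(1) by (auto simp: is_path_def)
  have "is_path V E (Q @ C)"
    using is_path_append[OF Qne Cne] is_path_mono[OF Q(1)] C'(1) QR Q(5) by auto
  moreover have "length (Q @ C) = card A + k" using Q(2) C'(2) by simp
  moreover have "hd (Q @ C) = x" "last (Q @ C) = y" using Q(4) Qne C'(3) Cne by simp_all
  moreover have "spaced 4 (Q @ C) (B \<union> {x, y})"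
  proof (rule spaced_append)
    have Q0: "\<forall>i<length Q. Q ! i \<in> B \<union> {x, y} \<longrightarrow> i = 0"
    proof (intro allI impI)
      fix i assume i: "i < length Q" "Q ! i \<in> B \<union> {x, y}"
      have "Q ! i \<in> A - set C" using QR nth_mem[OF i(1)] by blast
      with i(2) y_C have "Q ! i = Q ! 0" using Q(4) Qne by (auto simp: hd_conv_nth)
      with dQ i(1) Qne show "i = 0" by (simp add: nth_eq_iff_index_eq)
    qed
    then show "spaced 4 Q (B \<union> {x, y})" by (intro spaced_if_dvd) auto
    from Q0 Q(3)
    show "\<forall>i<length Q. Q ! i \<in> B \<union> {x, y} \<longrightarrow> i + 4 \<le> length Q" by auto
    show "spaced 4 C (B \<union> {x, y})"
      using spaced_if_dvd[of C "B \<union> {x, y}" 4] C'(4,5) nth_mem by fastforce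
  qed
  ultimately show ?thesis by blast
qed

lemma spaced_path:
  assumes xy: "x \<in> A" "y \<in> A" "x \<noteq> y" and l: "5 \<le> l" "l \<le> card V"
  shows "\<exists>p. is_path V E p \<and> length p = l \<and> hd p = x \<and> last p = y \<and> spaced 4 p (B \<union> {x, y})"
proof (cases "l \<le> card A")
  case True
  then obtain p where p: "is_path A E p" "length p = l" "hd p = x" "last p = y"
    using panconnectedD[OF panconnected_A xy, of l] l by auto
  then have "spaced 4 p (B \<union> {x, y})"
    using l by (intro spaced_if_ends) (auto simp: is_path_def)
  with p is_path_mono[OF p(1)] show ?thesis by blast
next
  case False
  with long_spaced_path[OF xy, of "l - card A"] card_A l show ?thesis by simp
qed

lemma sparse_cycle:
  assumes "3 \<le> l" "l \<le> card V"
  shows "\<exists>c. is_cycle V E c \<and> length c = l \<and> cycle_sparse4 c B"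
proof -
  have "0 < card A" using card_A small_B assms by linarith
  then obtain x where x: "x \<in> A" by (metis card_gt_0_iff ex_in_conv)
  have "0 < card (neighbours A E x)" using degree_in_A[OF x] by linarith
  then obtain y where "y \<in> neighbours A E x" by (metis card_gt_0_iff ex_in_conv)
  then have y: "y \<in> A" "E y x" "x \<noteq> y" using no_loop by (auto simp: neighbours_def intro: edge_sym)
  show ?thesis
  proof (cases "l \<le> 4")
    case True
    have "finite A" using finite_V by simp
    from dirac_surplus_card[OF this dirac_surplus_A x] have "8 \<le> card A" by simp
    then obtain p where p: "is_path A E p" "length p = l" "hd p = x" "last p = y"
      using panconnectedD[OF panconnected_A x y(1,3), of l] assms True by auto
    then have "is_cycle V E p" using is_cycle_if_path[OF is_path_mono] assms(1) y(2) by auto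
    moreover have "cycle_sparse4 p B" using p(1) by (intro cycle_sparse4_if_disjoint) (auto simp: is_path_def)
    ultimately show ?thesis using p(2) by blast
  next
    case False
    with spaced_path[OF x y(1,3), of l] assms
    obtain p where p: "is_path V E p" "length p = l" "hd p = x" "last p = y"
      "spaced 4 p (B \<union> {x, y})" by auto
    then have "is_cycle V E p" using is_cycle_if_path assms(1) y(2) by auto
    moreover have "cycle_sparse4 p B"
    proof (rule cycle_sparse4_if_spaced)
      show "spaced 4 p B" using spaced_mono[OF p(5)] by blast
      show "\<forall>k<length p. p ! k \<in> B \<longrightarrow> 4 \<le> k \<and> k + 4 < length p"
        using spaced_inner_position[of 4 p B] p(3-5) x y(1) by auto
    qed
    ultimately show ?thesis using p(2) by blast
  qed
qed

end

theorem lemma7p2: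
  fixes V :: "'a set" and E :: "'a \<Rightarrow> 'a \<Rightarrow> bool" and B :: "'a set"
  assumes "simple_graph V E"
    and "card V \<ge> 10"
    and "B \<subseteq> V"
    and "real (card B) \<le> real (card V) / 100"
    and "\<forall>v\<in>B. card (neighbours V E v) \<ge> 4 * card B + 2"
    and "\<forall>v\<in>V - B. real (card (neighbours V E v)) \<ge> real (card V) / 2 + 5 * real (card B) + 5"
  shows "(\<forall>l. 3 \<le> l \<and> l \<le> card V \<longrightarrow>
            (\<exists>c. is_cycle V E c \<and> length c = l \<and> cycle_sparse4 c B))
       \<and> (\<forall>x\<in>V - B. \<forall>y\<in>V - B. x \<noteq> y \<longrightarrow>
            (\<forall>l. 5 \<le> l \<and> l \<le> card V \<longrightarrow>
              (\<exists>p. is_path V E p \<and> length p = l \<and> hd p = x \<and> last p = y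
                   \<and> path_sparse4 p (B \<union> {x, y}))))"
proof -
  have "100 * card B \<le> card V" using assms(4) by linarith
  moreover have "card V + 10 * card B + 10 \<le> 2 * card (neighbours V E v)" if "v \<in> V - B" for v
  proof -
    have "real (card V) / 2 + 5 * real (card B) + 5 \<le> real (card (neighbours V E v))"
      using assms(6) that by blast
    then have "real (card V + 10 * card B + 10) \<le> real (2 * card (neighbours V E v))" by simp
    then show ?thesis by (simp only: of_nat_le_iff)
  qed
  ultimately interpret exceptional_graph V E B
    using assms(1,3,5) by unfold_locales auto
  show ?thesis
    using sparse_cycle spaced_path path_sparse4_if_spaced by meson
qed

end
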